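(* Let $(F,G,H)$ be an admissible triple, let $\Omega_{\mathfrak{A}}=(\mathscr{M},\langle\cdot,\cdot\rangle_{\mathscr{M}},\mathsf{D}_{\mathscr{M}},\mathfrak{A},\mathsf{L}_{\mathfrak{A}})$ and $\Omega_{\mathfrak{B}}=(\mathscr{N},\langle\cdot,\cdot\rangle_{\mathscr{N}},\mathsf{D}_{\mathscr{N}},\mathfrak{B},\mathsf{L}_{\mathfrak{B}})$ be metrized quantum vector bundles of type $(F,G,H)$, and let $\gamma=(\Omega_{\mathfrak{A}},\Omega_{\mathfrak{B}},\mathfrak{D},x,\pi_{\mathfrak{A}},\pi_{\mathfrak{B}},(\omega_j)_{j\in J},(\eta_j)_{j\in J})$ be a modular bridge from $\Omega_{\mathfrak{A}}$ to $\Omega_{\mathfrak{B}}$. If $\omega\in\mathscr{M}$ with $\mathsf{D}_{\mathscr{M}}(\omega)\le1$ and $j\in J$ satisfies $\mathrm{k}_{\Omega_{\mathfrak{A}}}(\omega,\omega_j)\le\iota(\gamma)$, then $\mathrm{dn}_\gamma(\omega,\eta_j)\le\rho(\gamma)$; the symmetric statement (with the roles of $\Omega_{\mathfrak{A}}$ and $\Omega_{\mathfrak{B}}$, and of anchors and co-anchors, exchanged) also holds. Consequently $$\max\left\{\begin{array}{l}\sup_{a\in\mathfrak{sa}(\mathfrak{A}),\mathsf{L}_{\mathfrak{A}}(a)\le1}\ \inf_{b\in\mathfrak{sa}(\mathfrak{B}),\mathsf{L}_{\mathfrak{B}}(b)\le1}\mathrm{bn}_\gamma(a,b),\\ \sup_{b\in\mathfrak{sa}(\mathfrak{B}),\mathsf{L}_{\mathfrak{B}}(b)\le1}\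 \inf_{a\in\mathfrak{sa}(\mathfrak{A}),\mathsf{L}_{\mathfrak{A}}(a)\le1}\mathrm{bn}_\gamma(a,b),\\ \sup_{\omega\in\mathscr{D}_1(\Omega_{\mathfrak{A}})}\ \inf_{\eta\in\mathscr{D}_1(\Omega_{\mathfrak{B}})}\mathrm{dn}_\gamma(\omega,\eta),\\ \sup_{\eta\in\mathscr{D}_1(\Omega_{\mathfrak{B}})}\ \inf_{\omega\in\mathscr{D}_1(\Omega_{\mathfrak{A}})}\mathrm{dn}_\gamma(\omega,\eta)\end{array}\right\}\le\rho(\gamma).$$
   Context: Notation: for a unital C*-algebra $\mathfrak{A}$, $\mathfrak{sa}(\mathfrak{A})$ denotes the set of self-adjoint elements and $\mathscr{S}(\mathfrak{A})$ the state space; $\Re a=(a+a^* )/2$, $\Im a=(a-a^* )/(2i)$; $a\circ b=(ab+ba)/2$, $\{a,b\}=(ab-ba)/(2i)$. Convention: a seminorm $\mathsf{L}$ defined on a subspace $\mathrm{dom}(\mathsf{L})$ is extended by $\infty$ outside it, with $0\cdot\infty=0$. A function $F:[0,\infty)^4\to[0,\infty)$ is admissible if it is nondecreasing for the product order and $x_1x_3+x_2x_4\le F(x_1,x_2,x_3,x_4)$. An $F$-quasi-Leibniz quantum compact metric space $(\mathfrak{A},\mathsf{L})$ is a unital C*-algebra $\mathfrak{A}$ with a seminorm $\mathsf{L}$ on a dense subspace $\mathrm{dom}(\mathsf{L})\subseteq\mathfrak{sa}(\mathfrak{A})$ closed under $\circ$ and $\{\cdot,\cdot\}$, such that: (i)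 $\{a\in\mathrm{dom}(\mathsf{L}):\mathsf{L}(a)=0\}=\mathbb{R}1_{\mathfrak{A}}$; (ii) $\mathrm{mk}_{\mathsf{L}}(\varphi,\psi)=\sup\{|\varphi(a)-\psi(a)|:a\in\mathfrak{sa}(\mathfrak{A}),\mathsf{L}(a)\le1\}$ metrizes the weak* topology on $\mathscr{S}(\mathfrak{A})$; (iii) $\{a:\mathsf{L}(a)\le1\}$ is norm closed; (iv) $\max\{\mathsf{L}(a\circ b),\mathsf{L}(\{a,b\})\}\le F(\|a\|,\|b\|,\mathsf{L}(a),\mathsf{L}(b))$ for $a,b\in\mathrm{dom}(\mathsf{L})$. A triple $(F,G,H)$ is admissible if $F$ is admissible, $G:[0,\infty)^3\to[0,\infty)$ is nondecreasing in each variable with $(x+y)z\le G(x,y,z)$, and $H:[0,\infty)^2\to[0,\infty)$ is nondecreasing in each variable with $2xy\le H(x,y)$. A left Hilbert $\mathfrak{A}$-module $(\mathscr{M},\langle\cdot,\cdot\rangle_{\mathscr{M}})$ is a left $\mathfrak{A}$-module with a map $\langle\cdot,\cdot\rangle_{\mathscr{M}}:\mathscr{M}\times\mathscr{M}\to\mathfrak{A}$, linear in the first and conjugate-linear in the second variable, with $\langle a\omega,\eta\rangle=a\langle\omega,\eta\rangle$, $\langle\omega,\eta\rangle^*=\langle\eta,\omega\rangle$, $\langle\omega,\omega\rangle\ge0$ with equality only for $\omega=0$, and complete for $\|\omega\|_{\mathscr{M}}=\|\langle\omega,\omega\rangle_{\mathscr{M}}\|_{\mathfrak{A}}^{1/2}$.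 A metrized quantum vector bundle of type $(F,G,H)$ is a tuple $\Omega=(\mathscr{M},\langle\cdot,\cdot\rangle_{\mathscr{M}},\mathsf{D},\mathfrak{A},\mathsf{L})$ where $(\mathfrak{A},\mathsf{L})$ is an $F$-quasi-Leibniz quantum compact metric space (the base space), $(\mathscr{M},\langle\cdot,\cdot\rangle_{\mathscr{M}})$ is a left Hilbert $\mathfrak{A}$-module, and $\mathsf{D}$ (the D-norm) is a norm on a dense complex subspace $\mathrm{dom}(\mathsf{D})$ of $\mathscr{M}$ (extended by $\infty$) such that: (1) $\|\omega\|_{\mathscr{M}}\le\mathsf{D}(\omega)$; (2) $\{\omega:\mathsf{D}(\omega)\le1\}$ is compact for $\|\cdot\|_{\mathscr{M}}$; (3) $\mathsf{D}(a\omega)\le G(\|a\|_{\mathfrak{A}},\mathsf{L}(a),\mathsf{D}(\omega))$ for $a\in\mathfrak{sa}(\mathfrak{A})$, $\omega\in\mathscr{M}$; (4) $\max\{\mathsf{L}(\Re\langle\omega,\eta\rangle_{\mathscr{M}}),\mathsf{L}(\Im\langle\omega,\eta\rangle_{\mathscr{M}})\}\le H(\mathsf{D}(\omega),\mathsf{D}(\eta))$. For $r\ge0$, $\mathscr{D}_r(\Omega)=\{\omega:\mathsf{D}(\omega)\le r\}$. The modular Monge–Kantorovich metric is $\mathrm{k}_\Omega(\omega,\eta)=\sup\{\|\langle\omega,\xi\rangle_{\mathscr{M}}-\langle\eta,\xi\rangle_{\mathscr{M}}\|_{\mathfrak{A}}:\xi\in\mathscr{D}_1(\Omega)\}$. Hausdorff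 distance: for a pseudo-metric $d$ on a set $X$ and nonempty $A,B\subseteq X$, $\mathrm{Haus}_d(A,B)=\max\{\sup_{a\in A}\inf_{b\in B}d(a,b),\sup_{b\in B}\inf_{a\in A}d(a,b)\}$. For a unital C*-algebra $\mathfrak{D}$ and $x\in\mathfrak{D}$, the 1-level set is $\mathscr{S}_1(\mathfrak{D}|x)=\{\varphi\in\mathscr{S}(\mathfrak{D}):\varphi((1-x)^*(1-x))=\varphi((1-x)(1-x)^* )=0\}$. Modular bridge: given metrized quantum vector bundles $\Omega_{\mathfrak{A}}=(\mathscr{M},\langle\cdot,\cdot\rangle_{\mathscr{M}},\mathsf{D}_{\mathscr{M}},\mathfrak{A},\mathsf{L}_{\mathfrak{A}})$ and $\Omega_{\mathfrak{B}}=(\mathscr{N},\langle\cdot,\cdot\rangle_{\mathscr{N}},\mathsf{D}_{\mathscr{N}},\mathfrak{B},\mathsf{L}_{\mathfrak{B}})$, a modular bridge from $\Omega_{\mathfrak{A}}$ to $\Omega_{\mathfrak{B}}$ is a tuple $\gamma=(\Omega_{\mathfrak{A}},\Omega_{\mathfrak{B}},\mathfrak{D},x,\pi_{\mathfrak{A}},\pi_{\mathfrak{B}},(\omega_j)_{j\in J},(\eta_j)_{j\in J})$ where $\mathfrak{D}$ is a unital C*-algebra, $x\in\mathfrak{D}$ (the pivot) satisfies $\|x\|_{\mathfrak{D}}=1$ and $\mathscr{S}_1(\mathfrak{D}|x)\neq\emptyset$, $\pi_{\mathfrak{A}}:\mathfrak{A}\to\mathfrak{D}$ and $\pi_{\mathfrak{B}}:\mathfrak{B}\to\mathfrak{D}$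 are unital injective $*$-morphisms, $J$ is a nonempty set, $\mathsf{D}_{\mathscr{M}}(\omega_j)\le1$ (anchors) and $\mathsf{D}_{\mathscr{N}}(\eta_j)\le1$ (co-anchors) for all $j\in J$. Associated quantities: the bridge seminorm $\mathrm{bn}_\gamma(a,b)=\|\pi_{\mathfrak{A}}(a)x-x\pi_{\mathfrak{B}}(b)\|_{\mathfrak{D}}$ for $a\in\mathfrak{A},b\in\mathfrak{B}$; the basic reach $\rho_\flat(\gamma)=\max\{\sup_{a\in\mathfrak{sa}(\mathfrak{A}),\mathsf{L}_{\mathfrak{A}}(a)\le1}\inf_{b\in\mathfrak{sa}(\mathfrak{B}),\mathsf{L}_{\mathfrak{B}}(b)\le1}\mathrm{bn}_\gamma(a,b),\ \sup_{b\in\mathfrak{sa}(\mathfrak{B}),\mathsf{L}_{\mathfrak{B}}(b)\le1}\inf_{a\in\mathfrak{sa}(\mathfrak{A}),\mathsf{L}_{\mathfrak{A}}(a)\le1}\mathrm{bn}_\gamma(a,b)\}$; the height $\varsigma(\gamma)=\max\{\mathrm{Haus}_{\mathrm{mk}_{\mathsf{L}_{\mathfrak{A}}}}(\mathscr{S}(\mathfrak{A}),\{\psi\circ\pi_{\mathfrak{A}}:\psi\in\mathscr{S}_1(\mathfrak{D}|x)\}),\ \mathrm{Haus}_{\mathrm{mk}_{\mathsf{L}_{\mathfrak{B}}}}(\mathscr{S}(\mathfrak{B}),\{\psi\circ\pi_{\mathfrak{B}}:\psi\in\mathscr{S}_1(\mathfrak{D}|x)\})\}$; the deck seminorm on $\mathscr{M}\oplus\mathscr{N}$,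 $\mathrm{dn}_\gamma(\omega,\eta)=\sup_{k\in J}\max\{\mathrm{bn}_\gamma(\langle\omega,\omega_k\rangle_{\mathscr{M}},\langle\eta,\eta_k\rangle_{\mathscr{N}}),\ \mathrm{bn}_\gamma(\langle\omega_k,\omega\rangle_{\mathscr{M}},\langle\eta_k,\eta\rangle_{\mathscr{N}})\}$; the modular reach $\rho_\sharp(\gamma)=\sup_{j\in J}\mathrm{dn}_\gamma(\omega_j,\eta_j)$; the imprint $\iota(\gamma)=\max\{\mathrm{Haus}_{\mathrm{k}_{\Omega_{\mathfrak{A}}}}(\{\omega_j:j\in J\},\mathscr{D}_1(\Omega_{\mathfrak{A}})),\ \mathrm{Haus}_{\mathrm{k}_{\Omega_{\mathfrak{B}}}}(\{\eta_j:j\in J\},\mathscr{D}_1(\Omega_{\mathfrak{B}}))\}$; the reach $\rho(\gamma)=\max\{\rho_\flat(\gamma),\rho_\sharp(\gamma)+\iota(\gamma)\}$; the length $\lambda(\gamma)=\max\{\varsigma(\gamma),\rho(\gamma)\}$. *)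

theory Defs
  imports "HOL-Analysis.Analysis"
begin

text \<open>A unital C*-algebra is modelled on a type 'a which is a (real) unital Banach
algebra (class real_normed_algebra_1 + banach: norm, completeness, submultiplicativity,
norm of the unit is 1); the complex scalar multiplication and the involution are
extra data satisfying the C*-axioms.\<close>

record 'a cstar_data =
  csmul :: "complex \<Rightarrow> 'a \<Rightarrow> 'a"
  cst :: "'a \<Rightarrow> 'a"

definition unital_cstar :: "('a::{real_normed_algebra_1,banach}) cstar_data \<Rightarrow> bool" where
  "unital_cstar A \<longleftrightarrow>
     (\<forall>r a. csmul A (complex_of_real r) a = r *\<^sub>R a) \<and>
     (\<forall>c d a. csmul A (c * d) a = csmul A c (csmul A d a)) \<and>
     (\<forall>c d a. csmul A (c + d) a = csmul A c a + csmul A d a) \<and>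
     (\<forall>c a b. csmul A c (a + b) = csmul A c a + csmul A c b) \<and>
     (\<forall>c a b. csmul A c (a * b) = csmul A c a * b \<and> csmul A c (a * b) = a * csmul A c b) \<and>
     (\<forall>c a. norm (csmul A c a) = cmod c * norm a) \<and>
     (\<forall>a b. cst A (a + b) = cst A a + cst A b) \<and>
     (\<forall>c a. cst A (csmul A c a) = csmul A (cnj c) (cst A a)) \<and>
     (\<forall>a b. cst A (a * b) = cst A b * cst A a) \<and>
     (\<forall>a. cst A (cst A a) = a) \<and>
     (\<forall>a. norm (cst A a * a) = (norm a)\<^sup>2)"

definition sa :: "'a cstar_data \<Rightarrow> 'a set" where
  "sa A = {a. cst A a = a}"

definition ReC :: "('a::real_vector) cstar_data \<Rightarrow> 'a \<Rightarrow> 'a" where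
  "ReC A a = (1/2) *\<^sub>R (a + cst A a)"

definition ImC :: "('a::real_vector) cstar_data \<Rightarrow> 'a \<Rightarrow> 'a" where
  "ImC A a = csmul A (- \<i> / 2) (a - cst A a)"

definition jordan :: "('a::{real_vector,times}) \<Rightarrow> 'a \<Rightarrow> 'a" where
  "jordan a b = (1/2) *\<^sub>R (a * b + b * a)"

definition lie :: "('a::{real_vector,times}) cstar_data \<Rightarrow> 'a \<Rightarrow> 'a \<Rightarrow> 'a" where
  "lie A a b = csmul A (- \<i> / 2) (a * b - b * a)"

definition cspectrum :: "('a::ring_1) cstar_data \<Rightarrow> 'a \<Rightarrow> complex set" where
  "cspectrum A a = {z. \<not> (\<exists>b. (a - csmul A z 1) * b = 1 \<and> b * (a - csmul A z 1) = 1)}"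

definition positive :: "('a::ring_1) cstar_data \<Rightarrow> 'a \<Rightarrow> bool" where
  "positive A a \<longleftrightarrow> a \<in> sa A \<and> cspectrum A a \<subseteq> complex_of_real ` {0..}"

definition states :: "('a::ring_1) cstar_data \<Rightarrow> ('a \<Rightarrow> complex) set" where
  "states A = {\<phi>. (\<forall>a b. \<phi> (a + b) = \<phi> a + \<phi> b) \<and> (\<forall>c a. \<phi> (csmul A c a) = c * \<phi> a)
                 \<and> (\<forall>a. positive A a \<longrightarrow> \<phi> a \<in> complex_of_real ` {0..}) \<and> \<phi> 1 = 1}"

definition unital_star_mono :: "('a::ring_1) cstar_data \<Rightarrow> ('d::ring_1) cstar_data \<Rightarrow> ('a \<Rightarrow> 'd) \<Rightarrow> bool" where
  "unital_star_mono A D \<pi> \<longleftrightarrow>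
     (\<forall>a b. \<pi> (a + b) = \<pi> a + \<pi> b) \<and> (\<forall>c a. \<pi> (csmul A c a) = csmul D c (\<pi> a)) \<and>
     (\<forall>a b. \<pi> (a * b) = \<pi> a * \<pi> b) \<and> (\<forall>a. \<pi> (cst A a) = cst D (\<pi> a)) \<and>
     \<pi> 1 = 1 \<and> inj \<pi>"

definition admissible_F :: "(real \<Rightarrow> real \<Rightarrow> real \<Rightarrow> real \<Rightarrow> real) \<Rightarrow> bool" where
  "admissible_F F \<longleftrightarrow>
     (\<forall>x1 x2 x3 x4. x1 \<ge> 0 \<and> x2 \<ge> 0 \<and> x3 \<ge> 0 \<and> x4 \<ge> 0 \<longrightarrow>
        0 \<le> F x1 x2 x3 x4 \<and> x1 * x3 + x2 * x4 \<le> F x1 x2 x3 x4 \<and>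
        (\<forall>y1 y2 y3 y4. x1 \<le> y1 \<and> x2 \<le> y2 \<and> x3 \<le> y3 \<and> x4 \<le> y4 \<longrightarrow>
            F x1 x2 x3 x4 \<le> F y1 y2 y3 y4))"

definition admissible_triple ::
  "(real \<Rightarrow> real \<Rightarrow> real \<Rightarrow> real \<Rightarrow> real) \<Rightarrow> (real \<Rightarrow> real \<Rightarrow> real \<Rightarrow> real) \<Rightarrow> (real \<Rightarrow> real \<Rightarrow> real) \<Rightarrow> bool" where
  "admissible_triple F G H \<longleftrightarrow> admissible_F F \<and>
     (\<forall>x y z. x \<ge> 0 \<and> y \<ge> 0 \<and> z \<ge> 0 \<longrightarrow>
        0 \<le> G x y z \<and> (x + y) * z \<le> G x y z \<and>
        (\<forall>x' y' z'. x \<le> x' \<and> y \<le> y' \<and> z \<le> z' \<longrightarrow> G x y z \<le> G x' y' z')) \<and>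
     (\<forall>x y. x \<ge> 0 \<and> y \<ge> 0 \<longrightarrow>
        0 \<le> H x y \<and> 2 * x * y \<le> H x y \<and>
        (\<forall>x' y'. x \<le> x' \<and> y \<le> y' \<longrightarrow> H x y \<le> H x' y'))"

text \<open>A seminorm L "extended by infinity" is represented by its domain domL and its
(finite) values on domL; "L(a) \<le> r" means a \<in> domL and L a \<le> r.\<close>

definition mk :: "'a cstar_data \<Rightarrow> 'a set \<Rightarrow> ('a \<Rightarrow> real) \<Rightarrow> ('a \<Rightarrow> complex) \<Rightarrow> ('a \<Rightarrow> complex) \<Rightarrow> ereal" where
  "mk A domL L \<phi> \<psi> = (SUP a \<in> {a \<in> sa A. a \<in> domL \<and> L a \<le> 1}. ereal (cmod (\<phi> a - \<psi> a)))"

definition qlqcms :: "('a::{real_normed_algebra_1,banach}) cstar_data \<Rightarrow> 'a set \<Rightarrow> ('a \<Rightarrow> real)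
     \<Rightarrow> (real \<Rightarrow> real \<Rightarrow> real \<Rightarrow> real \<Rightarrow> real) \<Rightarrow> bool" where
  "qlqcms A domL L F \<longleftrightarrow>
     unital_cstar A \<and>
     \<comment> \<open>dom(L) is a dense real subspace of sa(A)\<close>
     domL \<subseteq> sa A \<and> 0 \<in> domL \<and> (\<forall>a\<in>domL. \<forall>b\<in>domL. a + b \<in> domL) \<and>
     (\<forall>r. \<forall>a\<in>domL. r *\<^sub>R a \<in> domL) \<and> sa A \<subseteq> closure domL \<and>
     \<comment> \<open>L is a seminorm on dom(L)\<close>
     (\<forall>a\<in>domL. \<forall>b\<in>domL. L (a + b) \<le> L a + L b) \<and>
     (\<forall>r. \<forall>a\<in>domL. L (r *\<^sub>R a) = \<bar>r\<bar> * L a) \<and>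
     \<comment> \<open>closed under Jordan and Lie products\<close>
     (\<forall>a\<in>domL. \<forall>b\<in>domL. jordan a b \<in> domL \<and> lie A a b \<in> domL) \<and>
     \<comment> \<open>(i)\<close>
     {a \<in> domL. L a = 0} = range (\<lambda>r. r *\<^sub>R (1::'a)) \<and>
     \<comment> \<open>(ii) mk metrizes the weak* topology (pointwise convergence) on the state space\<close>
     (\<forall>\<phi>\<in>states A. \<forall>\<psi>\<in>states A. mk A domL L \<phi> \<psi> \<noteq> \<infinity>) \<and>
     Metric_space (states A) (\<lambda>\<phi> \<psi>. real_of_ereal (mk A domL L \<phi> \<psi>)) \<and>
     Metric_space.mtopology (states A) (\<lambda>\<phi> \<psi>. real_of_ereal (mk A domL L \<phi> \<psi>))
        = subtopology euclidean (states A) \<and>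
     \<comment> \<open>(iii)\<close>
     closed {a \<in> domL. L a \<le> 1} \<and>
     \<comment> \<open>(iv)\<close>
     (\<forall>a\<in>domL. \<forall>b\<in>domL.
        max (L (jordan a b)) (L (lie A a b)) \<le> F (norm a) (norm b) (L a) (L b))"

text \<open>A left Hilbert module is modelled on a type 'm which is a real Banach space whose
norm is required to be the norm induced by the inner product.\<close>

record ('a, 'm) hmod_data =
  msmul :: "complex \<Rightarrow> 'm \<Rightarrow> 'm"
  act :: "'a \<Rightarrow> 'm \<Rightarrow> 'm"
  inner :: "'m \<Rightarrow> 'm \<Rightarrow> 'a"

definition left_hilbert_module ::
  "('a::{real_normed_algebra_1,banach}) cstar_data \<Rightarrow> ('a, 'm::{real_normed_vector,banach}) hmod_data \<Rightarrow> bool" where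
  "left_hilbert_module A M \<longleftrightarrow>
     \<comment> \<open>complex vector space\<close>
     (\<forall>r \<omega>. msmul M (complex_of_real r) \<omega> = r *\<^sub>R \<omega>) \<and>
     (\<forall>c d \<omega>. msmul M (c * d) \<omega> = msmul M c (msmul M d \<omega>)) \<and>
     (\<forall>c d \<omega>. msmul M (c + d) \<omega> = msmul M c \<omega> + msmul M d \<omega>) \<and>
     (\<forall>c \<omega> \<eta>. msmul M c (\<omega> + \<eta>) = msmul M c \<omega> + msmul M c \<eta>) \<and>
     \<comment> \<open>left A-module\<close>
     (\<forall>a b \<omega>. act M (a + b) \<omega> = act M a \<omega> + act M b \<omega>) \<and>
     (\<forall>a \<omega> \<eta>. act M a (\<omega> + \<eta>) = act M a \<omega> + act M a \<eta>) \<and>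
     (\<forall>a b \<omega>. act M (a * b) \<omega> = act M a (act M b \<omega>)) \<and>
     (\<forall>\<omega>. act M 1 \<omega> = \<omega>) \<and>
     (\<forall>c a \<omega>. act M (csmul A c a) \<omega> = msmul M c (act M a \<omega>) \<and>
              act M a (msmul M c \<omega>) = msmul M c (act M a \<omega>)) \<and>
     \<comment> \<open>inner product\<close>
     (\<forall>\<omega> \<omega>' \<eta>. inner M (\<omega> + \<omega>') \<eta> = inner M \<omega> \<eta> + inner M \<omega>' \<eta>) \<and>
     (\<forall>c \<omega> \<eta>. inner M (msmul M c \<omega>) \<eta> = csmul A c (inner M \<omega> \<eta>)) \<and>
     (\<forall>\<omega> \<eta> \<eta>'. inner M \<omega> (\<eta> + \<eta>') = inner M \<omega> \<eta> + inner M \<omega> \<eta>') \<and>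
     (\<forall>c \<omega> \<eta>. inner M \<omega> (msmul M c \<eta>) = csmul A (cnj c) (inner M \<omega> \<eta>)) \<and>
     (\<forall>a \<omega> \<eta>. inner M (act M a \<omega>) \<eta> = a * inner M \<omega> \<eta>) \<and>
     (\<forall>\<omega> \<eta>. cst A (inner M \<omega> \<eta>) = inner M \<eta> \<omega>) \<and>
     (\<forall>\<omega>. positive A (inner M \<omega> \<omega>)) \<and>
     (\<forall>\<omega>. inner M \<omega> \<omega> = 0 \<longrightarrow> \<omega> = 0) \<and>
     \<comment> \<open>the norm of 'm is the Hilbert module norm (completeness: class banach)\<close>
     (\<forall>\<omega>. norm \<omega> = sqrt (norm (inner M \<omega> \<omega>)))"

definition Dball :: "'m set \<Rightarrow> ('m \<Rightarrow> real) \<Rightarrow> real \<Rightarrow> 'm set" where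
  "Dball domD D r = {\<omega> \<in> domD. D \<omega> \<le> r}"

definition mqvb ::
  "('a::{real_normed_algebra_1,banach}) cstar_data \<Rightarrow> 'a set \<Rightarrow> ('a \<Rightarrow> real) \<Rightarrow>
   ('a, 'm::{real_normed_vector,banach}) hmod_data \<Rightarrow> 'm set \<Rightarrow> ('m \<Rightarrow> real) \<Rightarrow>
   (real \<Rightarrow> real \<Rightarrow> real \<Rightarrow> real \<Rightarrow> real) \<Rightarrow> (real \<Rightarrow> real \<Rightarrow> real \<Rightarrow> real) \<Rightarrow> (real \<Rightarrow> real \<Rightarrow> real) \<Rightarrow> bool" where
  "mqvb A domL L M domD D F G H \<longleftrightarrow>
     qlqcms A domL L F \<and> left_hilbert_module A M \<and>
     \<comment> \<open>D is a norm on a dense complex subspace dom(D)\<close>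
     0 \<in> domD \<and> (\<forall>\<omega>\<in>domD. \<forall>\<eta>\<in>domD. \<omega> + \<eta> \<in> domD) \<and>
     (\<forall>c. \<forall>\<omega>\<in>domD. msmul M c \<omega> \<in> domD) \<and> closure domD = UNIV \<and>
     (\<forall>\<omega>\<in>domD. \<forall>\<eta>\<in>domD. D (\<omega> + \<eta>) \<le> D \<omega> + D \<eta>) \<and>
     (\<forall>c. \<forall>\<omega>\<in>domD. D (msmul M c \<omega>) = cmod c * D \<omega>) \<and>
     (\<forall>\<omega>\<in>domD. D \<omega> = 0 \<longrightarrow> \<omega> = 0) \<and>
     \<comment> \<open>(1)\<close>
     (\<forall>\<omega>\<in>domD. norm \<omega> \<le> D \<omega>) \<and>
     \<comment> \<open>(2)\<close>
     compact (Dball domD D 1) \<and>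
     \<comment> \<open>(3)\<close>
     (\<forall>a \<in> sa A \<inter> domL. \<forall>\<omega>\<in>domD.
        act M a \<omega> \<in> domD \<and> D (act M a \<omega>) \<le> G (norm a) (L a) (D \<omega>)) \<and>
     \<comment> \<open>(4)\<close>
     (\<forall>\<omega>\<in>domD. \<forall>\<eta>\<in>domD.
        ReC A (inner M \<omega> \<eta>) \<in> domL \<and> ImC A (inner M \<omega> \<eta>) \<in> domL \<and>
        max (L (ReC A (inner M \<omega> \<eta>))) (L (ImC A (inner M \<omega> \<eta>))) \<le> H (D \<omega>) (D \<eta>))"

definition kmod :: "('a::real_normed_vector, 'm) hmod_data \<Rightarrow> 'm set \<Rightarrow> ('m \<Rightarrow> real) \<Rightarrow> 'm \<Rightarrow> 'm \<Rightarrow> ereal" where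
  "kmod M domD D \<omega> \<eta> =
     (SUP \<xi> \<in> Dball domD D 1. ereal (norm (inner M \<omega> \<xi> - inner M \<eta> \<xi>)))"

definition Haus :: "('x \<Rightarrow> 'x \<Rightarrow> ereal) \<Rightarrow> 'x set \<Rightarrow> 'x set \<Rightarrow> ereal" where
  "Haus d X Y = max (SUP a\<in>X. INF b\<in>Y. d a b) (SUP b\<in>Y. INF a\<in>X. d a b)"

definition level1 :: "('d::ring_1) cstar_data \<Rightarrow> 'd \<Rightarrow> ('d \<Rightarrow> complex) set" where
  "level1 D x = {\<phi> \<in> states D. \<phi> (cst D (1 - x) * (1 - x)) = 0 \<and> \<phi> ((1 - x) * cst D (1 - x)) = 0}"

definition modular_bridge ::
  "('a::{real_normed_algebra_1,banach}) cstar_data \<Rightarrow> ('a, 'm::{real_normed_vector,banach}) hmod_data \<Rightarrow> 'm set \<Rightarrow> ('m \<Rightarrow> real) \<Rightarrow>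
   ('b::{real_normed_algebra_1,banach}) cstar_data \<Rightarrow> ('b, 'n::{real_normed_vector,banach}) hmod_data \<Rightarrow> 'n set \<Rightarrow> ('n \<Rightarrow> real) \<Rightarrow>
   ('d::{real_normed_algebra_1,banach}) cstar_data \<Rightarrow> 'd \<Rightarrow> ('a \<Rightarrow> 'd) \<Rightarrow> ('b \<Rightarrow> 'd) \<Rightarrow>
   'j set \<Rightarrow> ('j \<Rightarrow> 'm) \<Rightarrow> ('j \<Rightarrow> 'n) \<Rightarrow> bool" where
  "modular_bridge A M domDM DM B N domDN DN Dd x \<pi>A \<pi>B J \<omega>s \<eta>s \<longleftrightarrow>
     unital_cstar Dd \<and> norm x = 1 \<and> level1 Dd x \<noteq> {} \<and>
     unital_star_mono A Dd \<pi>A \<and> unital_star_mono B Dd \<pi>B \<and>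
     J \<noteq> {} \<and> (\<forall>j\<in>J. \<omega>s j \<in> Dball domDM DM 1 \<and> \<eta>s j \<in> Dball domDN DN 1)"

definition bn :: "('a \<Rightarrow> 'd::real_normed_algebra) \<Rightarrow> ('b \<Rightarrow> 'd) \<Rightarrow> 'd \<Rightarrow> 'a \<Rightarrow> 'b \<Rightarrow> real" where
  "bn \<pi>A \<pi>B x a b = norm (\<pi>A a * x - x * \<pi>B b)"

definition dn :: "('a \<Rightarrow> 'd::real_normed_algebra) \<Rightarrow> ('b \<Rightarrow> 'd) \<Rightarrow> 'd \<Rightarrow> ('a, 'm) hmod_data \<Rightarrow> ('b, 'n) hmod_data \<Rightarrow>
     'j set \<Rightarrow> ('j \<Rightarrow> 'm) \<Rightarrow> ('j \<Rightarrow> 'n) \<Rightarrow> 'm \<Rightarrow> 'n \<Rightarrow> ereal" where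
  "dn \<pi>A \<pi>B x M N J \<omega>s \<eta>s \<omega> \<eta> =
     (SUP k\<in>J. ereal (max (bn \<pi>A \<pi>B x (inner M \<omega> (\<omega>s k)) (inner N \<eta> (\<eta>s k)))
                           (bn \<pi>A \<pi>B x (inner M (\<omega>s k) \<omega>) (inner N (\<eta>s k) \<eta>))))"

definition basic_reach ::
  "'a cstar_data \<Rightarrow> 'a set \<Rightarrow> ('a \<Rightarrow> real) \<Rightarrow> 'b cstar_data \<Rightarrow> 'b set \<Rightarrow> ('b \<Rightarrow> real) \<Rightarrow>
   ('a \<Rightarrow> 'd::real_normed_algebra) \<Rightarrow> ('b \<Rightarrow> 'd) \<Rightarrow> 'd \<Rightarrow> ereal" where
  "basic_reach A domLA LA B domLB LB \<pi>A \<pi>B x =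
     max (SUP a \<in> {a \<in> sa A. a \<in> domLA \<and> LA a \<le> 1}. INF b \<in> {b \<in> sa B. b \<in> domLB \<and> LB b \<le> 1}.
             ereal (bn \<pi>A \<pi>B x a b))
         (SUP b \<in> {b \<in> sa B. b \<in> domLB \<and> LB b \<le> 1}. INF a \<in> {a \<in> sa A. a \<in> domLA \<and> LA a \<le> 1}.
             ereal (bn \<pi>A \<pi>B x a b))"

definition modular_reach ::
  "('a \<Rightarrow> 'd::real_normed_algebra) \<Rightarrow> ('b \<Rightarrow> 'd) \<Rightarrow> 'd \<Rightarrow> ('a, 'm) hmod_data \<Rightarrow> ('b, 'n) hmod_data \<Rightarrow>
     'j set \<Rightarrow> ('j \<Rightarrow> 'm) \<Rightarrow> ('j \<Rightarrow> 'n) \<Rightarrow> ereal" where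
  "modular_reach \<pi>A \<pi>B x M N J \<omega>s \<eta>s = (SUP j\<in>J. dn \<pi>A \<pi>B x M N J \<omega>s \<eta>s (\<omega>s j) (\<eta>s j))"

definition imprint ::
  "('a::real_normed_vector, 'm) hmod_data \<Rightarrow> 'm set \<Rightarrow> ('m \<Rightarrow> real) \<Rightarrow>
   ('b::real_normed_vector, 'n) hmod_data \<Rightarrow> 'n set \<Rightarrow> ('n \<Rightarrow> real) \<Rightarrow>
   'j set \<Rightarrow> ('j \<Rightarrow> 'm) \<Rightarrow> ('j \<Rightarrow> 'n) \<Rightarrow> ereal" where
  "imprint M domDM DM N domDN DN J \<omega>s \<eta>s =
     max (Haus (kmod M domDM DM) (\<omega>s ` J) (Dball domDM DM 1))
         (Haus (kmod N domDN DN) (\<eta>s ` J) (Dball domDN DN 1))"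

definition reach ::
  "('a::real_normed_vector) cstar_data \<Rightarrow> 'a set \<Rightarrow> ('a \<Rightarrow> real) \<Rightarrow> ('a, 'm) hmod_data \<Rightarrow> 'm set \<Rightarrow> ('m \<Rightarrow> real) \<Rightarrow>
   ('b::real_normed_vector) cstar_data \<Rightarrow> 'b set \<Rightarrow> ('b \<Rightarrow> real) \<Rightarrow> ('b, 'n) hmod_data \<Rightarrow> 'n set \<Rightarrow> ('n \<Rightarrow> real) \<Rightarrow>
   ('a \<Rightarrow> 'd::real_normed_algebra) \<Rightarrow> ('b \<Rightarrow> 'd) \<Rightarrow> 'd \<Rightarrow> 'j set \<Rightarrow> ('j \<Rightarrow> 'm) \<Rightarrow> ('j \<Rightarrow> 'n) \<Rightarrow> ereal" where
  "reach A domLA LA M domDM DM B domLB LB N domDN DN \<pi>A \<pi>B x J \<omega>s \<eta>s =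
     max (basic_reach A domLA LA B domLB LB \<pi>A \<pi>B x)
         (modular_reach \<pi>A \<pi>B x M N J \<omega>s \<eta>s + imprint M domDM DM N domDN DN J \<omega>s \<eta>s)"

end

theory Submission
  imports Defs "HOL-Computational_Algebra.Formal_Power_Series"
begin

text \<open>The analytic input is that a unital *-morphism \<open>\<pi>\<close> between C*-algebras is contractive.
For self-adjoint \<open>h\<close> with \<open>\<parallel>h\<parallel> < 1\<close> the binomial series of \<open>\<surd>(1 - t)\<close> evaluated at \<open>h\<^sup>2\<close> gives
a self-adjoint \<open>s\<close> commuting with \<open>h\<close> with \<open>s\<^sup>2 = 1 - h\<^sup>2\<close>; then \<open>w = h + i s\<close> is unitary, so
\<open>\<pi> h = (\<pi> w + (\<pi> w)\<^sup>*) / 2\<close> has norm at most 1, and the C*-identity extends this to all elements.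

Since \<open>\<parallel>x\<parallel> = 1\<close>, contractivity gives \<open>bn(a, b) \<le> \<parallel>a - a'\<parallel> + bn(a', b)\<close>. Hence every term of
\<open>dn(\<omega>, \<eta>\<^sub>j)\<close> exceeds the corresponding term of \<open>dn(\<omega>\<^sub>j, \<eta>\<^sub>j) \<le> \<rho>\<^sub>\<sharp>\<close> by at most
\<open>\<parallel>\<langle>\<omega> - \<omega>\<^sub>j, \<omega>\<^sub>k\<rangle>\<parallel> \<le> k(\<omega>, \<omega>\<^sub>j)\<close>. The involution exchanges the roles of the two bundles, which gives
the co-anchor estimate, and the Hausdorff estimates follow by comparing each \<open>\<omega>\<close> with anchors
close to it in \<open>k\<close>.\<close>

lemma
  assumes "unital_cstar A"
  shows csmul_of_real: "csmul A (complex_of_real r) a = r *\<^sub>R a"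
    and csmul_mult: "csmul A (c * d) a = csmul A c (csmul A d a)"
    and csmul_add: "csmul A (c + d) a = csmul A c a + csmul A d a"
    and csmul_mult_left: "csmul A c (a * b) = csmul A c a * b"
    and csmul_mult_right: "csmul A c (a * b) = a * csmul A c b"
    and cst_add: "cst A (a + b) = cst A a + cst A b"
    and cst_csmul: "cst A (csmul A c a) = csmul A (cnj c) (cst A a)"
    and cst_mult: "cst A (a * b) = cst A b * cst A a"
    and cst_cst: "cst A (cst A a) = a"
    and norm_cst_mult_self: "norm (cst A a * a) = (norm a)\<^sup>2"
  using assms unfolding unital_cstar_def by metis+

lemma csmul_zero_left: "unital_cstar A \<Longrightarrow> csmul A 0 a = 0"
  using csmul_of_real[of A 0 a] by simp

lemma csmul_one_left: "unital_cstar A \<Longrightarrow> csmul A 1 a = a"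
  using csmul_of_real[of A 1 a] by simp

lemma cst_scaleR: "unital_cstar A \<Longrightarrow> cst A (r *\<^sub>R a) = r *\<^sub>R cst A a"
  by (metis csmul_of_real cst_csmul complex_cnj_complex_of_real)

lemma cst_one:
  assumes "unital_cstar A"
  shows "cst A (1::'a::{real_normed_algebra_1,banach}) = 1"
  by (metis assms cst_cst cst_mult mult.left_neutral mult.right_neutral)

lemma norm_cst:
  assumes A: "unital_cstar A"
  shows "norm (cst A a) = norm a"
proof -
  have le: "norm b \<le> norm (cst A b)" for b
  proof (cases "b = 0")
    case False
    have "(norm b)\<^sup>2 \<le> norm (cst A b) * norm b"
      using norm_cst_mult_self[OF A, of b] norm_mult_ineq[of "cst A b" b] by simp
    with False show ?thesis by (simp add: power2_eq_square)
  qed simp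
  show ?thesis using le[of a] le[of "cst A a"] by (simp add: cst_cst[OF A] antisym)
qed

lemma bounded_linear_cst: "unital_cstar A \<Longrightarrow> bounded_linear (cst A)"
  by (rule bounded_linear_intro[where K=1]) (simp_all add: cst_add cst_scaleR norm_cst)

lemma cst_diff: "unital_cstar A \<Longrightarrow> cst A (a - b) = cst A a - cst A b"
  by (rule linear_diff[OF bounded_linear.linear[OF bounded_linear_cst]])

lemma cst_power: "unital_cstar A \<Longrightarrow> cst A (a ^ n) = cst A a ^ n"
  by (induction n) (simp_all add: cst_one cst_mult power_commutes)

lemma norm_eq_1_if_cst_mult_self_eq_1:
  assumes "unital_cstar A" and "cst A u * u = 1"
  shows "norm u = 1"
  using norm_cst_mult_self[OF assms(1), of u] assms(2) norm_ge_zero[of u]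
  by (auto simp: power2_eq_1_iff)

lemma
  assumes "unital_star_mono A D \<pi>"
  shows star_mono_add: "\<pi> (a + b) = \<pi> a + \<pi> b"
    and star_mono_csmul: "\<pi> (csmul A c a) = csmul D c (\<pi> a)"
    and star_mono_mult: "\<pi> (a * b) = \<pi> a * \<pi> b"
    and star_mono_cst: "\<pi> (cst A a) = cst D (\<pi> a)"
    and star_mono_one: "\<pi> 1 = 1"
  using assms unfolding unital_star_mono_def by auto

lemma star_mono_diff: "unital_star_mono A D \<pi> \<Longrightarrow> \<pi> (a - b) = \<pi> a - \<pi> b"
  by (metis star_mono_add diff_add_cancel add_diff_cancel)

lemma star_mono_scaleR:
  "unital_cstar A \<Longrightarrow> unital_cstar D \<Longrightarrow> unital_star_mono A D \<pi> \<Longrightarrow> \<pi> (r *\<^sub>R a) = r *\<^sub>R \<pi> a"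
  using csmul_of_real[of A r a, symmetric] csmul_of_real[of D r "\<pi> a"] star_mono_csmul[of A D \<pi>]
  by simp

lemma cst_inner: "left_hilbert_module A M \<Longrightarrow> cst A (inner M \<omega> \<eta>) = inner M \<eta> \<omega>"
  unfolding left_hilbert_module_def by auto

section \<open>Square roots of \<open>1 - k\<close> for \<open>\<parallel>k\<parallel> < 1\<close>\<close>

text \<open>The Taylor coefficients of \<open>\<surd>(1 - t)\<close>.\<close>

definition sqrt_coeff :: "nat \<Rightarrow> real" where
  "sqrt_coeff n = ((1/2) gchoose n) * (-1) ^ n"

lemma abs_sqrt_coeff_le_1: "\<bar>sqrt_coeff n\<bar> \<le> 1"
proof (induction n)
  case 0
  show ?case by (simp add: sqrt_coeff_def)
next
  case (Suc k)
  have "\<bar>sqrt_coeff (Suc k)\<bar> * (real k + 1) = \<bar>of_nat (Suc k) * ((1/2::real) gchoose Suc k)\<bar>"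
    by (simp add: sqrt_coeff_def abs_mult)
  also have "of_nat (Suc k) * ((1/2::real) gchoose Suc k) = ((1/2) gchoose k) * (1/2 - of_nat k)"
    using gbinomial_mult_1[of "1/2::real" k] by (simp add: algebra_simps)
  also have "\<bar>((1/2::real) gchoose k) * (1/2 - of_nat k)\<bar> = \<bar>sqrt_coeff k\<bar> * \<bar>1/2 - real k\<bar>"
    by (simp add: sqrt_coeff_def abs_mult)
  also have "\<dots> \<le> 1 * (real k + 1)"
    using Suc by (intro mult_mono) auto
  finally show ?case by (rule mult_right_le_imp_le) simp
qed

lemma sqrt_coeff_convolution:
  "(\<Sum>i\<le>n. sqrt_coeff i * sqrt_coeff (n - i)) = (if n = 0 then 1 else if n = 1 then -1 else 0)"
proof -
  have "(\<Sum>i\<le>n. sqrt_coeff i * sqrt_coeff (n - i))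
      = (\<Sum>i\<le>n. ((1/2::real) gchoose i) * ((1/2) gchoose (n - i))) * (-1) ^ n"
    unfolding sum_distrib_right sqrt_coeff_def
    by (intro sum.cong refl) (simp add: power_add[symmetric] mult_ac)
  also have "\<dots> = ((1::real) gchoose n) * (-1) ^ n"
    using gbinomial_Vandermonde[of "1/2::real" "1/2" n] by (simp add: atMost_atLeast0)
  also have "(1::real) gchoose n = of_nat (1 choose n)"
    by (metis binomial_gbinomial of_nat_1)
  finally show ?thesis by (cases n) (auto simp: binomial_eq_0)
qed

definition sqrt_series :: "'a::{real_normed_algebra_1,banach} \<Rightarrow> 'a" where
  "sqrt_series k = (\<Sum>n. sqrt_coeff n *\<^sub>R k ^ n)"

lemma summable_norm_sqrt_series:
  fixes k :: "'a::{real_normed_algebra_1,banach}"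
  assumes "norm k < 1"
  shows "summable (\<lambda>n. norm (sqrt_coeff n *\<^sub>R k ^ n))"
proof (rule summable_comparison_test[OF _ summable_geometric[of "norm k"]])
  have "\<bar>sqrt_coeff n\<bar> * norm (k ^ n) \<le> 1 * norm k ^ n" for n
    by (intro mult_mono abs_sqrt_coeff_le_1 norm_power_ineq) auto
  then show "\<exists>N. \<forall>n\<ge>N. norm (norm (sqrt_coeff n *\<^sub>R k ^ n)) \<le> norm k ^ n"
    by simp
qed (use assms in simp)

lemma sums_sqrt_series:
  fixes k :: "'a::{real_normed_algebra_1,banach}"
  assumes "norm k < 1"
  shows "(\<lambda>n. sqrt_coeff n *\<^sub>R k ^ n) sums sqrt_series k"
  unfolding sqrt_series_def
  by (rule summable_sums[OF summable_norm_cancel[OF summable_norm_sqrt_series[OF assms]]])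

lemma sqrt_series_square:
  fixes k :: "'a::{real_normed_algebra_1,banach}"
  assumes "norm k < 1"
  shows "sqrt_series k * sqrt_series k = 1 - k"
proof -
  let ?a = "\<lambda>n. sqrt_coeff n *\<^sub>R k ^ n"
  have "(\<lambda>n. \<Sum>i\<le>n. ?a i * ?a (n - i)) sums (sqrt_series k * sqrt_series k)"
    unfolding sqrt_series_def
    by (rule Cauchy_product_sums[OF summable_norm_sqrt_series[OF assms] summable_norm_sqrt_series[OF assms]])
  moreover have "(\<Sum>i\<le>n. ?a i * ?a (n - i)) = (if n = 0 then 1 else if n = 1 then - k else 0)" for n
  proof -
    have "(\<Sum>i\<le>n. ?a i * ?a (n - i)) = (\<Sum>i\<le>n. sqrt_coeff i * sqrt_coeff (n - i)) *\<^sub>R k ^ n"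
      unfolding scaleR_sum_left
      by (intro sum.cong refl) (simp add: power_add[symmetric])
    then show ?thesis by (simp add: sqrt_coeff_convolution)
  qed
  moreover have "(\<lambda>n. if n = 0 then 1 else if n = 1 then - k else 0) sums (1 - k)"
    using sums_finite[of "{0, 1}" "\<lambda>n. if n = 0 then 1 else if n = 1 then - k else 0"] by simp
  ultimately show ?thesis by (simp add: sums_unique2)
qed

lemma sqrt_series_commute:
  fixes h k :: "'a::{real_normed_algebra_1,banach}"
  assumes "norm k < 1" and "h * k = k * h"
  shows "h * sqrt_series k = sqrt_series k * h"
proof -
  have summable: "summable (\<lambda>n. sqrt_coeff n *\<^sub>R k ^ n)"
    using sums_sqrt_series[OF assms(1)] by (rule sums_summable)
  have "h * k ^ n = k ^ n * h" for n
    by (metis assms(2) power_commuting_commutes)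
  then show ?thesis
    unfolding sqrt_series_def suminf_mult[OF summable, symmetric] suminf_mult2[OF summable]
    by simp
qed

lemma cst_sqrt_series:
  assumes A: "unital_cstar A" and "norm k < 1" and "cst A k = k"
  shows "cst A (sqrt_series k) = sqrt_series k"
proof -
  from bounded_linear.sums[OF bounded_linear_cst[OF A] sums_sqrt_series[OF assms(2)]]
  have "(\<lambda>n. sqrt_coeff n *\<^sub>R k ^ n) sums cst A (sqrt_series k)"
    by (simp add: cst_scaleR[OF A] cst_power[OF A] assms(3))
  then show ?thesis
    using sums_sqrt_series[OF assms(2)] by (rule sums_unique2)
qed

section \<open>Unital *-morphisms are contractive\<close>

lemma cst_add_i_self_adjoint:
  assumes A: "unital_cstar A" and "cst A h = h" and "cst A s = s"
  shows "cst A (h + csmul A \<i> s) = h + csmul A (- \<i>) s"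
  by (simp add: assms cst_add[OF A] cst_csmul[OF A])

lemma cst_mult_self_add_i_sqrt:
  assumes A: "unital_cstar A" and h: "cst A h = h" and s: "cst A s = s"
    and hs: "h * s = s * h" and ss: "s * s = 1 - h * h"
  shows "cst A (h + csmul A \<i> s) * (h + csmul A \<i> s) = 1"
proof -
  let ?u = "csmul A \<i> s" and ?v = "csmul A (- \<i>) s"
  have "cst A (h + ?u) * (h + ?u) = h * h + (h * ?u + ?v * h) + ?v * ?u"
    by (simp add: cst_add_i_self_adjoint[OF A h s] algebra_simps)
  also have "h * ?u + ?v * h = csmul A \<i> (h * s) + csmul A (- \<i>) (h * s)"
    by (metis csmul_mult_right[OF A] csmul_mult_left[OF A] hs)
  also have "\<dots> = 0"
    by (simp add: csmul_add[OF A, symmetric] csmul_zero_left[OF A])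
  also have "?v * ?u = s * s"
    by (simp add: csmul_mult_right[OF A, symmetric] csmul_mult_left[OF A, symmetric]
        csmul_mult[OF A, symmetric] csmul_one_left[OF A])
  finally show ?thesis by (simp add: ss)
qed

lemma norm_star_mono_self_adjoint_le_1:
  assumes A: "unital_cstar A" and D: "unital_cstar D" and \<pi>: "unital_star_mono A D \<pi>"
    and h: "cst A h = h" and "norm h < 1"
  shows "norm (\<pi> h) \<le> 1"
proof -
  have "norm (h * h) < 1"
    using norm_mult_ineq[of h h] mult_left_le[of "norm h" "norm h"] \<open>norm h < 1\<close> by simp
  define s where "s = sqrt_series (h * h)"
  have s: "cst A s = s" and hs: "h * s = s * h" and ss: "s * s = 1 - h * h"
    unfolding s_def using \<open>norm (h * h) < 1\<close>
    by (simp_all add: cst_sqrt_series[OF A] cst_mult[OF A] h sqrt_series_commute sqrt_series_square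
        mult.assoc)
  define w where "w = h + csmul A \<i> s"
  have "cst D (\<pi> w) * \<pi> w = 1"
    using cst_mult_self_add_i_sqrt[OF A h s hs ss]
    by (simp add: w_def star_mono_cst[OF \<pi>, symmetric] star_mono_mult[OF \<pi>, symmetric] star_mono_one[OF \<pi>])
  then have "norm (\<pi> w) = 1"
    by (rule norm_eq_1_if_cst_mult_self_eq_1[OF D])
  have "w + cst A w = 2 *\<^sub>R h"
    by (simp add: w_def cst_add_i_self_adjoint[OF A h s] csmul_add[OF A, symmetric]
        csmul_zero_left[OF A] scaleR_2)
  then have "2 *\<^sub>R \<pi> h = \<pi> w + cst D (\<pi> w)"
    by (metis star_mono_scaleR[OF A D \<pi>] star_mono_add[OF \<pi>] star_mono_cst[OF \<pi>])
  then have "2 * norm (\<pi> h) \<le> norm (\<pi> w) + norm (cst D (\<pi> w))"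
    by (metis norm_triangle_ineq norm_scaleR abs_numeral)
  with \<open>norm (\<pi> w) = 1\<close> show ?thesis
    by (simp add: norm_cst[OF D])
qed

lemma norm_star_mono_self_adjoint_le:
  assumes A: "unital_cstar A" and D: "unital_cstar D" and \<pi>: "unital_star_mono A D \<pi>"
    and h: "cst A h = h"
  shows "norm (\<pi> h) \<le> norm h"
proof (rule dense_ge)
  fix t assume "norm h < t"
  then have "t > 0" using norm_ge_zero[of h] by linarith
  have "norm (\<pi> ((1/t) *\<^sub>R h)) \<le> 1"
    using \<open>norm h < t\<close> \<open>t > 0\<close>
    by (intro norm_star_mono_self_adjoint_le_1[OF A D \<pi>]) (auto simp: cst_scaleR[OF A] h)
  with \<open>t > 0\<close> show "norm (\<pi> h) \<le> t"
    by (simp add: star_mono_scaleR[OF A D \<pi>] field_simps)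
qed

lemma norm_star_mono_le:
  assumes A: "unital_cstar A" and D: "unital_cstar D" and \<pi>: "unital_star_mono A D \<pi>"
  shows "norm (\<pi> a) \<le> norm a"
proof -
  have "(norm (\<pi> a))\<^sup>2 = norm (\<pi> (cst A a * a))"
    by (simp add: norm_cst_mult_self[OF D] star_mono_mult[OF \<pi>] star_mono_cst[OF \<pi>])
  also have "\<dots> \<le> norm (cst A a * a)"
    by (rule norm_star_mono_self_adjoint_le[OF A D \<pi>]) (simp add: cst_mult[OF A] cst_cst[OF A])
  also have "\<dots> = (norm a)\<^sup>2" by (rule norm_cst_mult_self[OF A])
  finally show ?thesis by (rule power2_le_imp_le) simp
qed

lemma bn_le_norm_diff_add:
  fixes \<pi>A :: "'a::real_normed_vector \<Rightarrow> 'd::real_normed_algebra"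
  assumes contr: "\<And>a. norm (\<pi>A a) \<le> norm a" and diff: "\<And>a a'. \<pi>A (a - a') = \<pi>A a - \<pi>A a'"
    and x: "norm x \<le> 1"
  shows "bn \<pi>A \<pi>B x a b \<le> norm (a - a') + bn \<pi>A \<pi>B x a' b"
proof -
  have "\<pi>A a * x - x * \<pi>B b = \<pi>A (a - a') * x + (\<pi>A a' * x - x * \<pi>B b)"
    by (simp add: diff algebra_simps)
  moreover have "norm (\<pi>A (a - a') * x) \<le> norm (a - a')"
    using norm_mult_ineq[of "\<pi>A (a - a')" x] mult_left_le[OF x norm_ge_zero[of "\<pi>A (a - a')"]]
      contr[of "a - a'"] by linarith
  ultimately show ?thesis
    unfolding bn_def by (metis add_right_mono norm_triangle_ineq order_trans)
qed

lemma bn_swap: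
  assumes D: "unital_cstar D" and \<pi>A: "unital_star_mono A D \<pi>A" and \<pi>B: "unital_star_mono B D \<pi>B"
  shows "bn \<pi>A \<pi>B x a b = bn \<pi>B \<pi>A (cst D x) (cst B b) (cst A a)"
proof -
  have "bn \<pi>A \<pi>B x a b = norm (cst D (\<pi>A a * x - x * \<pi>B b))"
    unfolding bn_def by (simp add: norm_cst[OF D])
  also have "\<dots> = bn \<pi>B \<pi>A (cst D x) (cst B b) (cst A a)"
    unfolding bn_def
    by (simp add: cst_diff[OF D] cst_mult[OF D] star_mono_cst[OF \<pi>A] star_mono_cst[OF \<pi>B]
        norm_minus_commute)
  finally show ?thesis .
qed

lemma dn_swap:
  assumes D: "unital_cstar D" and \<pi>A: "unital_star_mono A D \<pi>A" and \<pi>B: "unital_star_mono B D \<pi>B"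
    and M: "left_hilbert_module A M" and N: "left_hilbert_module B N"
  shows "dn \<pi>A \<pi>B x M N J \<omega>s \<eta>s \<omega> \<eta> = dn \<pi>B \<pi>A (cst D x) N M J \<eta>s \<omega>s \<eta> \<omega>"
  unfolding dn_def
  by (simp add: bn_swap[OF D \<pi>A \<pi>B] cst_inner[OF M] cst_inner[OF N] max.commute)

lemma modular_reach_swap:
  assumes D: "unital_cstar D" and \<pi>A: "unital_star_mono A D \<pi>A" and \<pi>B: "unital_star_mono B D \<pi>B"
    and M: "left_hilbert_module A M" and N: "left_hilbert_module B N"
  shows "modular_reach \<pi>A \<pi>B x M N J \<omega>s \<eta>s = modular_reach \<pi>B \<pi>A (cst D x) N M J \<eta>s \<omega>s"
  unfolding modular_reach_def by (simp add: dn_swap[OF assms])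

lemma dn_nonneg: "J \<noteq> {} \<Longrightarrow> 0 \<le> dn \<pi>A \<pi>B x M N J \<omega>s \<eta>s \<omega> \<eta>"
  unfolding dn_def bn_def by (auto intro: SUP_upper2 simp: le_max_iff_disj)

lemma modular_reach_nonneg: "J \<noteq> {} \<Longrightarrow> 0 \<le> modular_reach \<pi>A \<pi>B x M N J \<omega>s \<eta>s"
  unfolding modular_reach_def by (auto intro: SUP_upper2 dn_nonneg)

lemma kmod_nonneg: "Dball domD D 1 \<noteq> {} \<Longrightarrow> 0 \<le> kmod M domD D \<omega> \<eta>"
  unfolding kmod_def by (auto intro: SUP_upper2)

lemma kmod_commute: "kmod M domD D \<omega> \<eta> = kmod M domD D \<eta> \<omega>"
  unfolding kmod_def by (simp add: norm_minus_commute)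

lemma dn_le_modular_reach_add_kmod:
  fixes \<pi>A :: "'a::{real_normed_algebra_1,banach} \<Rightarrow> 'd::real_normed_algebra"
  assumes A: "unital_cstar A" and M: "left_hilbert_module A M"
    and contr: "\<And>a. norm (\<pi>A a) \<le> norm a" and diff: "\<And>a a'. \<pi>A (a - a') = \<pi>A a - \<pi>A a'"
    and x: "norm x \<le> 1" and anchors: "\<omega>s ` J \<subseteq> Dball domD D 1" and j: "j \<in> J"
  shows "dn \<pi>A \<pi>B x M N J \<omega>s \<eta>s \<omega> (\<eta>s j)
    \<le> modular_reach \<pi>A \<pi>B x M N J \<omega>s \<eta>s + kmod M domD D \<omega> (\<omega>s j)"
  unfolding dn_def
proof (rule SUP_least)
  fix k assume k: "k \<in> J"
  let ?bn = "bn \<pi>A \<pi>B x"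
  define c where "c = inner M \<omega> (\<omega>s k) - inner M (\<omega>s j) (\<omega>s k)"
  have "norm (inner M (\<omega>s k) \<omega> - inner M (\<omega>s k) (\<omega>s j)) = norm c"
    unfolding c_def by (metis cst_diff[OF A] cst_inner[OF M] norm_cst[OF A])
  then have "?bn (inner M (\<omega>s k) \<omega>) (inner N (\<eta>s k) (\<eta>s j))
      \<le> norm c + ?bn (inner M (\<omega>s k) (\<omega>s j)) (inner N (\<eta>s k) (\<eta>s j))"
    using bn_le_norm_diff_add[OF contr diff x] by metis
  moreover have "?bn (inner M \<omega> (\<omega>s k)) (inner N (\<eta>s j) (\<eta>s k))
      \<le> norm c + ?bn (inner M (\<omega>s j) (\<omega>s k)) (inner N (\<eta>s j) (\<eta>s k))"
    unfolding c_def by (rule bn_le_norm_diff_add[OF contr diff x])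
  ultimately have "ereal (max (?bn (inner M \<omega> (\<omega>s k)) (inner N (\<eta>s j) (\<eta>s k)))
                              (?bn (inner M (\<omega>s k) \<omega>) (inner N (\<eta>s k) (\<eta>s j))))
      \<le> ereal (norm c) + ereal (max (?bn (inner M (\<omega>s j) (\<omega>s k)) (inner N (\<eta>s j) (\<eta>s k)))
                                      (?bn (inner M (\<omega>s k) (\<omega>s j)) (inner N (\<eta>s k) (\<eta>s j))))"
    by (simp add: max_def)
  also have "\<dots> \<le> kmod M domD D \<omega> (\<omega>s j) + modular_reach \<pi>A \<pi>B x M N J \<omega>s \<eta>s"
  proof (rule add_mono)
    show "ereal (norm c) \<le> kmod M domD D \<omega> (\<omega>s j)"
      unfolding kmod_def c_def using anchors k by (intro SUP_upper2[of "\<omega>s k"]) auto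
    show "ereal (max (?bn (inner M (\<omega>s j) (\<omega>s k)) (inner N (\<eta>s j) (\<eta>s k)))
                     (?bn (inner M (\<omega>s k) (\<omega>s j)) (inner N (\<eta>s k) (\<eta>s j))))
        \<le> modular_reach \<pi>A \<pi>B x M N J \<omega>s \<eta>s"
      unfolding modular_reach_def dn_def using j k by (blast intro: SUP_upper2)
  qed
  finally show "ereal (max (?bn (inner M \<omega> (\<omega>s k)) (inner N (\<eta>s j) (\<eta>s k)))
                           (?bn (inner M (\<omega>s k) \<omega>) (inner N (\<eta>s k) (\<eta>s j))))
      \<le> modular_reach \<pi>A \<pi>B x M N J \<omega>s \<eta>s + kmod M domD D \<omega> (\<omega>s j)"
    by (simp add: add.commute)
qed

lemma SUP_INF_le_add_Haus:
  fixes d :: "'x \<Rightarrow> 'y \<Rightarrow> ereal" and k :: "'x \<Rightarrow> 'x \<Rightarrow> ereal"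
  assumes "J \<noteq> {}" and "\<eta>s ` J \<subseteq> Y" and "0 \<le> r" and "\<And>a b. 0 \<le> k a b"
    and le: "\<And>\<omega> j. \<omega> \<in> X \<Longrightarrow> j \<in> J \<Longrightarrow> d \<omega> (\<eta>s j) \<le> r + k (\<omega>s j) \<omega>"
  shows "(SUP \<omega>\<in>X. INF \<eta>\<in>Y. d \<omega> \<eta>) \<le> r + Haus k (\<omega>s ` J) X"
proof (rule SUP_least)
  fix \<omega> assume "\<omega> \<in> X"
  have "(INF \<eta>\<in>Y. d \<omega> \<eta>) \<le> (INF j\<in>J. r + k (\<omega>s j) \<omega>)"
  proof (rule INF_greatest)
    fix j assume "j \<in> J"
    then have "\<eta>s j \<in> Y" using assms(2) by blast
    then have "(INF \<eta>\<in>Y. d \<omega> \<eta>) \<le> d \<omega> (\<eta>s j)" by (rule INF_lower)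
    also have "\<dots> \<le> r + k (\<omega>s j) \<omega>" using le[OF \<open>\<omega> \<in> X\<close> \<open>j \<in> J\<close>] .
    finally show "(INF \<eta>\<in>Y. d \<omega> \<eta>) \<le> r + k (\<omega>s j) \<omega>" .
  qed
  also have "\<dots> = r + (INF a\<in>\<omega>s ` J. k a \<omega>)"
    unfolding image_image using assms(3,4) by (intro INF_ereal_add_right[OF \<open>J \<noteq> {}\<close>]) auto
  also have "(INF a\<in>\<omega>s ` J. k a \<omega>) \<le> Haus k (\<omega>s ` J) X"
    unfolding Haus_def using \<open>\<omega> \<in> X\<close> by (intro max.coboundedI2 SUP_upper)
  finally show "(INF \<eta>\<in>Y. d \<omega> \<eta>) \<le> r + Haus k (\<omega>s ` J) X"
    by (simp add: add_left_mono)
qed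

lemma modular_bridge_dn_le:
  assumes bundleA: "mqvb A domLA LA M domDM DM F G H"
    and bundleB: "mqvb B domLB LB N domDN DN F G H"
    and bridge: "modular_bridge A M domDM DM B N domDN DN Dd x \<pi>A \<pi>B J \<omega>s \<eta>s"
    and j: "j \<in> J"
  shows "dn \<pi>A \<pi>B x M N J \<omega>s \<eta>s \<omega> (\<eta>s j)
      \<le> modular_reach \<pi>A \<pi>B x M N J \<omega>s \<eta>s + kmod M domDM DM \<omega> (\<omega>s j)"
    and "dn \<pi>A \<pi>B x M N J \<omega>s \<eta>s (\<omega>s j) \<eta>
      \<le> modular_reach \<pi>A \<pi>B x M N J \<omega>s \<eta>s + kmod N domDN DN \<eta> (\<eta>s j)"
proof -
  have A: "unital_cstar A" and M: "left_hilbert_module A M"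
    and B: "unital_cstar B" and N: "left_hilbert_module B N"
    using bundleA bundleB unfolding mqvb_def qlqcms_def by auto
  have D: "unital_cstar Dd" and x: "norm x = 1"
    and \<pi>A: "unital_star_mono A Dd \<pi>A" and \<pi>B: "unital_star_mono B Dd \<pi>B"
    and anchors: "\<omega>s ` J \<subseteq> Dball domDM DM 1" "\<eta>s ` J \<subseteq> Dball domDN DN 1"
    using bridge unfolding modular_bridge_def by auto
  show "dn \<pi>A \<pi>B x M N J \<omega>s \<eta>s \<omega> (\<eta>s j)
      \<le> modular_reach \<pi>A \<pi>B x M N J \<omega>s \<eta>s + kmod M domDM DM \<omega> (\<omega>s j)"
    by (rule dn_le_modular_reach_add_kmod[OF A M norm_star_mono_le[OF A D \<pi>A] star_mono_diff[OF \<pi>A]])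
      (use x anchors j in auto)
  have "dn \<pi>B \<pi>A (cst Dd x) N M J \<eta>s \<omega>s \<eta> (\<omega>s j)
      \<le> modular_reach \<pi>B \<pi>A (cst Dd x) N M J \<eta>s \<omega>s + kmod N domDN DN \<eta> (\<eta>s j)"
    by (rule dn_le_modular_reach_add_kmod[OF B N norm_star_mono_le[OF B D \<pi>B] star_mono_diff[OF \<pi>B]])
      (use x anchors j in \<open>auto simp: norm_cst[OF D]\<close>)
  then show "dn \<pi>A \<pi>B x M N J \<omega>s \<eta>s (\<omega>s j) \<eta>
      \<le> modular_reach \<pi>A \<pi>B x M N J \<omega>s \<eta>s + kmod N domDN DN \<eta> (\<eta>s j)"
    by (simp add: dn_swap[OF D \<pi>A \<pi>B M N] modular_reach_swap[OF D \<pi>A \<pi>B M N])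
qed

lemma modular_bridge_SUP_INF_dn_le:
  assumes bundleA: "mqvb A domLA LA M domDM DM F G H"
    and bundleB: "mqvb B domLB LB N domDN DN F G H"
    and bridge: "modular_bridge A M domDM DM B N domDN DN Dd x \<pi>A \<pi>B J \<omega>s \<eta>s"
  shows "(SUP \<omega> \<in> Dball domDM DM 1. INF \<eta> \<in> Dball domDN DN 1. dn \<pi>A \<pi>B x M N J \<omega>s \<eta>s \<omega> \<eta>)
      \<le> modular_reach \<pi>A \<pi>B x M N J \<omega>s \<eta>s + imprint M domDM DM N domDN DN J \<omega>s \<eta>s"
    and "(SUP \<eta> \<in> Dball domDN DN 1. INF \<omega> \<in> Dball domDM DM 1. dn \<pi>A \<pi>B x M N J \<omega>s \<eta>s \<omega> \<eta>)
      \<le> modular_reach \<pi>A \<pi>B x M N J \<omega>s \<eta>s + imprint M domDM DM N domDN DN J \<omega>s \<eta>s"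
proof -
  let ?mr = "modular_reach \<pi>A \<pi>B x M N J \<omega>s \<eta>s"
  let ?im = "imprint M domDM DM N domDN DN J \<omega>s \<eta>s"
  have J: "J \<noteq> {}" and anchors: "\<omega>s ` J \<subseteq> Dball domDM DM 1" "\<eta>s ` J \<subseteq> Dball domDN DN 1"
    using bridge unfolding modular_bridge_def by auto
  have kmod_nonneg_M: "0 \<le> kmod M domDM DM a b" and kmod_nonneg_N: "0 \<le> kmod N domDN DN c d"
    for a b c d
    using anchors J by (auto intro!: kmod_nonneg)
  have dn_le_M: "dn \<pi>A \<pi>B x M N J \<omega>s \<eta>s \<omega> (\<eta>s j) \<le> ?mr + kmod M domDM DM (\<omega>s j) \<omega>"
    if "j \<in> J" for \<omega> j
    using modular_bridge_dn_le(1)[OF bundleA bundleB bridge that, of \<omega>]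
    by (simp only: kmod_commute[of M domDM DM \<omega>])
  have dn_le_N: "dn \<pi>A \<pi>B x M N J \<omega>s \<eta>s (\<omega>s j) \<eta> \<le> ?mr + kmod N domDN DN (\<eta>s j) \<eta>"
    if "j \<in> J" for \<eta> j
    using modular_bridge_dn_le(2)[OF bundleA bundleB bridge that, of \<eta>]
    by (simp only: kmod_commute[of N domDN DN \<eta>])
  have "Haus (kmod M domDM DM) (\<omega>s ` J) (Dball domDM DM 1) \<le> ?im"
    and "Haus (kmod N domDN DN) (\<eta>s ` J) (Dball domDN DN 1) \<le> ?im"
    unfolding imprint_def by simp_all
  note Haus_le_imprint = add_left_mono[OF this(1), of ?mr] add_left_mono[OF this(2), of ?mr]
  have "(SUP \<omega> \<in> Dball domDM DM 1. INF \<eta> \<in> Dball domDN DN 1. dn \<pi>A \<pi>B x M N J \<omega>s \<eta>s \<omega> \<eta>)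
      \<le> ?mr + Haus (kmod M domDM DM) (\<omega>s ` J) (Dball domDM DM 1)"
    by (rule SUP_INF_le_add_Haus[OF J anchors(2) modular_reach_nonneg[OF J]])
      (auto intro: kmod_nonneg_M dn_le_M)
  with Haus_le_imprint(1)
  show "(SUP \<omega> \<in> Dball domDM DM 1. INF \<eta> \<in> Dball domDN DN 1. dn \<pi>A \<pi>B x M N J \<omega>s \<eta>s \<omega> \<eta>)
      \<le> ?mr + ?im"
    by (rule order_trans[rotated])
  have "(SUP \<eta> \<in> Dball domDN DN 1. INF \<omega> \<in> Dball domDM DM 1. dn \<pi>A \<pi>B x M N J \<omega>s \<eta>s \<omega> \<eta>)
      \<le> ?mr + Haus (kmod N domDN DN) (\<eta>s ` J) (Dball domDN DN 1)"
    by (rule SUP_INF_le_add_Haus[OF J anchors(1) modular_reach_nonneg[OF J]])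
      (auto intro: kmod_nonneg_N dn_le_N)
  with Haus_le_imprint(2)
  show "(SUP \<eta> \<in> Dball domDN DN 1. INF \<omega> \<in> Dball domDM DM 1. dn \<pi>A \<pi>B x M N J \<omega>s \<eta>s \<omega> \<eta>)
      \<le> ?mr + ?im"
    by (rule order_trans[rotated])
qed

theorem mainTheorem4:
  fixes F :: "real \<Rightarrow> real \<Rightarrow> real \<Rightarrow> real \<Rightarrow> real"
    and G :: "real \<Rightarrow> real \<Rightarrow> real \<Rightarrow> real"
    and H :: "real \<Rightarrow> real \<Rightarrow> real"
    and A :: "('a::{real_normed_algebra_1,banach}) cstar_data" and domLA :: "'a set" and LA :: "'a \<Rightarrow> real"
    and M :: "('a, 'm::{real_normed_vector,banach}) hmod_data" and domDM :: "'m set" and DM :: "'m \<Rightarrow> real"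
    and B :: "('b::{real_normed_algebra_1,banach}) cstar_data" and domLB :: "'b set" and LB :: "'b \<Rightarrow> real"
    and N :: "('b, 'n::{real_normed_vector,banach}) hmod_data" and domDN :: "'n set" and DN :: "'n \<Rightarrow> real"
    and Dd :: "('d::{real_normed_algebra_1,banach}) cstar_data" and x :: 'd
    and \<pi>A :: "'a \<Rightarrow> 'd" and \<pi>B :: "'b \<Rightarrow> 'd"
    and J :: "'j set" and \<omega>s :: "'j \<Rightarrow> 'm" and \<eta>s :: "'j \<Rightarrow> 'n"
  assumes adm: "admissible_triple F G H"
    and bundleA: "mqvb A domLA LA M domDM DM F G H"
    and bundleB: "mqvb B domLB LB N domDN DN F G H"
    and bridge: "modular_bridge A M domDM DM B N domDN DN Dd x \<pi>A \<pi>B J \<omega>s \<eta>s"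
  shows
    "(\<forall>\<omega> \<in> Dball domDM DM 1. \<forall>j\<in>J.
        kmod M domDM DM \<omega> (\<omega>s j) \<le> imprint M domDM DM N domDN DN J \<omega>s \<eta>s \<longrightarrow>
        dn \<pi>A \<pi>B x M N J \<omega>s \<eta>s \<omega> (\<eta>s j)
          \<le> reach A domLA LA M domDM DM B domLB LB N domDN DN \<pi>A \<pi>B x J \<omega>s \<eta>s)
   \<and> (\<forall>\<eta> \<in> Dball domDN DN 1. \<forall>j\<in>J.
        kmod N domDN DN \<eta> (\<eta>s j) \<le> imprint M domDM DM N domDN DN J \<omega>s \<eta>s \<longrightarrow>
        dn \<pi>A \<pi>B x M N J \<omega>s \<eta>s (\<omega>s j) \<eta>
          \<le> reach A domLA LA M domDM DM B domLB LB N domDN DN \<pi>A \<pi>B x J \<omega>s \<eta>s)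
   \<and> max (max (SUP a \<in> {a \<in> sa A. a \<in> domLA \<and> LA a \<le> 1}. INF b \<in> {b \<in> sa B. b \<in> domLB \<and> LB b \<le> 1}.
                    ereal (bn \<pi>A \<pi>B x a b))
               (SUP b \<in> {b \<in> sa B. b \<in> domLB \<and> LB b \<le> 1}. INF a \<in> {a \<in> sa A. a \<in> domLA \<and> LA a \<le> 1}.
                    ereal (bn \<pi>A \<pi>B x a b)))
          (max (SUP \<omega> \<in> Dball domDM DM 1. INF \<eta> \<in> Dball domDN DN 1. dn \<pi>A \<pi>B x M N J \<omega>s \<eta>s \<omega> \<eta>)
               (SUP \<eta> \<in> Dball domDN DN 1. INF \<omega> \<in> Dball domDM DM 1. dn \<pi>A \<pi>B x M N J \<omega>s \<eta>s \<omega> \<eta>))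
       \<le> reach A domLA LA M domDM DM B domLB LB N domDN DN \<pi>A \<pi>B x J \<omega>s \<eta>s"
proof -
  let ?mr = "modular_reach \<pi>A \<pi>B x M N J \<omega>s \<eta>s"
  let ?im = "imprint M domDM DM N domDN DN J \<omega>s \<eta>s"
  let ?reach = "reach A domLA LA M domDM DM B domLB LB N domDN DN \<pi>A \<pi>B x J \<omega>s \<eta>s"
  have reach: "?mr + ?im \<le> ?reach" "basic_reach A domLA LA B domLB LB \<pi>A \<pi>B x \<le> ?reach"
    unfolding reach_def by simp_all
  note dn_le = modular_bridge_dn_le[OF bundleA bundleB bridge]
  show ?thesis
  proof (intro conjI ballI impI max.boundedI)
    fix \<omega> j assume "j \<in> J" and "kmod M domDM DM \<omega> (\<omega>s j) \<le> ?im"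
    from dn_le(1)[OF \<open>j \<in> J\<close>] add_left_mono[OF this(2)] reach(1)
    show "dn \<pi>A \<pi>B x M N J \<omega>s \<eta>s \<omega> (\<eta>s j) \<le> ?reach" by (blast intro: order_trans)
  next
    fix \<eta> j assume "j \<in> J" and "kmod N domDN DN \<eta> (\<eta>s j) \<le> ?im"
    from dn_le(2)[OF \<open>j \<in> J\<close>] add_left_mono[OF this(2)] reach(1)
    show "dn \<pi>A \<pi>B x M N J \<omega>s \<eta>s (\<omega>s j) \<eta> \<le> ?reach" by (blast intro: order_trans)
  qed (use reach modular_bridge_SUP_INF_dn_le[OF bundleA bundleB bridge] in
    \<open>auto simp: basic_reach_def intro: order_trans\<close>)
qed

end
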